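(* Let $n\in\mathbb{N}$, let $p$ be a prime with $p\nmid n$, and let $q\ge1$ be an integer. Then \[ \frac{M_q(pn)}{\tau(pn)}\le\frac{M_q(n)}{\tau(n)}+\frac{1}{\tau(n)}\sum_{\substack{a+b=q\\ 1\le b\le q/2}}\binom{q}{a}\int_{\mathbb{R}}\Delta(n;u)^a\,\Delta(n;u-\log p)^b\,du, \] where the sum runs over integers $a,b$. Moreover, $M_q(pn)/\tau(pn)\ge M_q(n)/\tau(n)$.
   Context: For $n\in\mathbb{N}$ and $u\in\mathbb{R}$, $\Delta(n;u)=\#\{d\mid n: e^u<d\le e^{u+1}\}$; $M_q(n)=\int_{\mathbb{R}}\Delta(n;u)^q\,du$; $\tau(n)$ is the number of divisors of $n$. *)

theory Defs
  imports "HOL-Analysis.Analysis"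
begin

definition Delta :: "nat \<Rightarrow> real \<Rightarrow> nat" where
  "Delta n u = card {d. d dvd n \<and> exp u < real d \<and> real d \<le> exp (u + 1)}"

definition M :: "nat \<Rightarrow> nat \<Rightarrow> real" where
  "M q n = (\<integral>u. real (Delta n u) ^ q \<partial>lborel)"

definition tau :: "nat \<Rightarrow> nat" where
  "tau n = card {d. d dvd n}"

end

theory Submission
  imports Defs
begin

text \<open>
  The divisors of \<open>p n\<close> are the divisors \<open>d\<close> of \<open>n\<close> together with the \<open>p d\<close>, so
  \<open>\<tau>(p n) = 2 \<tau>(n)\<close> and \<open>\<Delta>(p n; u) = \<Delta>(n; u) + \<Delta>(n; u - log p)\<close>. Expanding the \<open>q\<close>-th
  power binomially writes \<open>M\<^sub>q(p n)\<close> as \<open>\<Sum>\<^sub>b binom(q,b) I(q-b, b)\<close> with mixed moments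
  \<open>I(a, b) = \<integral> \<Delta>(n;u)\<^sup>a \<Delta>(n;u - log p)\<^sup>b du\<close>. The involution \<open>d \<mapsto> n/d\<close> reflects \<open>\<Delta>(n;\<cdot>)\<close>
  about \<open>(log n - 1)/2\<close>, which gives \<open>I(a, b) = I(b, a)\<close>. Hence the summands are nonnegative
  and symmetric under \<open>b \<mapsto> q - b\<close>, the two end terms both equal \<open>M\<^sub>q(n)\<close>, and each middle
  term is counted at most twice in the half-sum over \<open>1 \<le> b \<le> q/2\<close>.
\<close>

definition mixed_moment :: "nat \<Rightarrow> real \<Rightarrow> nat \<Rightarrow> nat \<Rightarrow> real" where
  "mixed_moment n c a b = (\<integral>u. real (Delta n u) ^ a * real (Delta n (u - c)) ^ b \<partial>lborel)"

lemma M_eq_mixed_moment: "M q n = mixed_moment n c q 0"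
  by (simp add: M_def mixed_moment_def)

lemma mixed_moment_nonneg: "mixed_moment n c a b \<ge> 0"
  unfolding mixed_moment_def by (intro integral_nonneg_AE) auto

lemma card_divisors_prime_mult:
  fixes p n :: nat
  assumes "prime p" "\<not> p dvd n" "n > 0"
  shows "card {d. d dvd p * n \<and> P d} = card {d. d dvd n \<and> P d} + card {d. d dvd n \<and> P (p * d)}"
proof -
  have p0: "p > 0" using assms(1) prime_gt_0_nat by blast
  have split: "{d. d dvd p * n \<and> P d} = {d. d dvd n \<and> P d} \<union> (*) p ` {d. d dvd n \<and> P (p * d)}"
  proof (intro set_eqI iffI)
    fix d assume d: "d \<in> {d. d dvd p * n \<and> P d}"
    show "d \<in> {d. d dvd n \<and> P d} \<union> (*) p ` {d. d dvd n \<and> P (p * d)}"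
    proof (cases "p dvd d")
      case True
      then obtain e where "d = p * e" by blast
      with d p0 show ?thesis by auto
    next
      case False
      then have "coprime d p"
        using assms(1) by (metis coprime_commute prime_imp_coprime)
      with d show ?thesis by (auto simp: coprime_dvd_mult_right_iff)
    qed
  qed auto
  have "{d. d dvd n \<and> P d} \<inter> (*) p ` {d. d dvd n \<and> P (p * d)} = {}"
    using assms(2) by auto
  moreover have "inj_on ((*) p) {d. d dvd n \<and> P (p * d)}"
    using p0 by (auto simp: inj_on_def)
  ultimately show ?thesis
    unfolding split using assms(3) by (subst card_Un_disjoint) (auto simp: card_image)
qed

lemma tau_prime_mult:
  fixes p n :: nat
  assumes "prime p" "\<not> p dvd n" "n > 0"
  shows "tau (p * n) = 2 * tau n"
  using card_divisors_prime_mult[OF assms, of "\<lambda>_. True"] by (simp add: tau_def)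

lemma Delta_prime_mult:
  fixes p n :: nat
  assumes "prime p" "\<not> p dvd n" "n > 0"
  shows "Delta (p * n) u = Delta n u + Delta n (u - ln (real p))"
proof -
  have p0: "real p > 0" using assms(1) prime_gt_0_nat by simp
  have "exp u < real (p * d) \<and> real (p * d) \<le> exp (u + 1) \<longleftrightarrow>
        exp (u - ln (real p)) < real d \<and> real d \<le> exp (u - ln (real p) + 1)" for d
    using p0 by (simp add: exp_diff exp_add field_simps)
  then show ?thesis
    unfolding Delta_def using card_divisors_prime_mult[OF assms] by simp
qed

lemma Delta_eq_sum_indicator:
  assumes "n > 0"
  shows "real (Delta n u) = (\<Sum>d | d dvd n. indicator {ln (real d) - 1..<ln (real d)} u)"
proof -
  have "{d. d dvd n \<and> exp u < real d \<and> real d \<le> exp (u + 1)} =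
        {d \<in> {d. d dvd n}. u \<in> {ln (real d) - 1..<ln (real d)}}"
  proof (intro set_eqI)
    fix d
    show "d \<in> {d. d dvd n \<and> exp u < real d \<and> real d \<le> exp (u + 1)} \<longleftrightarrow>
          d \<in> {d \<in> {d. d dvd n}. u \<in> {ln (real d) - 1..<ln (real d)}}"
    proof (cases "d dvd n")
      case True
      then have "real d > 0" using assms by (auto intro: gr0I)
      then have "exp u < real d \<longleftrightarrow> u < ln (real d)" "real d \<le> exp (u + 1) \<longleftrightarrow> ln (real d) \<le> u + 1"
        using exp_less_cancel_iff[of u "ln (real d)"] exp_le_cancel_iff[of "ln (real d)" "u + 1"] by auto
      with True show ?thesis by auto
    qed auto
  qed
  then show ?thesis
    unfolding Delta_def using assms
    by (simp add: sum.inter_filter[symmetric] indicator_def of_bool_def)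
qed

lemma Delta_le_tau:
  assumes "n > 0"
  shows "Delta n u \<le> tau n"
  unfolding Delta_def tau_def using assms by (intro card_mono) auto

lemma Delta_eq_0_outside:
  assumes "n > 0" "u < -1 \<or> u \<ge> ln (real n)"
  shows "Delta n u = 0"
proof -
  have "indicator {ln (real d) - 1..<ln (real d)} u = (0::real)" if "d dvd n" for d
  proof -
    have "1 \<le> d" "d \<le> n" using that assms(1) by (auto simp: dvd_imp_le Suc_le_eq intro: gr0I)
    then have "0 \<le> ln (real d)" "ln (real d) \<le> ln (real n)" by auto
    then show ?thesis using assms(2) by (auto simp: indicator_def)
  qed
  then show ?thesis using Delta_eq_sum_indicator[OF assms(1), of u] by simp
qed

lemma borel_measurable_Delta [measurable]:
  assumes "n > 0"
  shows "(\<lambda>u. real (Delta n u)) \<in> borel_measurable borel"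
  by (subst Delta_eq_sum_indicator[OF assms]) measurable

lemma integrable_mixed_moment:
  assumes "n > 0" "a + b \<ge> 1"
  shows "integrable lborel (\<lambda>u. real (Delta n u) ^ a * real (Delta n (u - c)) ^ b)"
proof (rule Bochner_Integration.integrable_bound)
  let ?I = "{-1 - \<bar>c\<bar> .. ln (real n) + \<bar>c\<bar>}"
  show "integrable lborel (\<lambda>u. indicator ?I u *\<^sub>R real (tau n) ^ (a + b))"
    by (intro integrable_indicator) (auto simp: emeasure_lborel_Icc_eq)
  have "(\<lambda>u. real (Delta n (u - c))) \<in> borel_measurable borel"
    using measurable_compose[OF _ borel_measurable_Delta[OF assms(1)], of "\<lambda>u. u - c"] by measurable
  with assms(1) show "(\<lambda>u. real (Delta n u) ^ a * real (Delta n (u - c)) ^ b) \<in> borel_measurable lborel"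
    by measurable
  show "AE u in lborel. norm (real (Delta n u) ^ a * real (Delta n (u - c)) ^ b)
          \<le> norm (indicator ?I u *\<^sub>R real (tau n) ^ (a + b) :: real)"
  proof (intro AE_I2)
    fix u
    show "norm (real (Delta n u) ^ a * real (Delta n (u - c)) ^ b)
          \<le> norm (indicator ?I u *\<^sub>R real (tau n) ^ (a + b) :: real)"
    proof (cases "u \<in> ?I")
      case True
      have "real (Delta n u) ^ a * real (Delta n (u - c)) ^ b \<le> real (tau n) ^ a * real (tau n) ^ b"
        using Delta_le_tau[OF assms(1)] by (intro mult_mono power_mono) auto
      with True show ?thesis by (simp add: power_add)
    next
      case False
      then have "u < -1 \<or> u \<ge> ln (real n)" "u - c < -1 \<or> u - c \<ge> ln (real n)" by auto
      then have "Delta n u = 0" "Delta n (u - c) = 0"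
        using Delta_eq_0_outside[OF assms(1)] by auto
      with False assms(2) show ?thesis by (cases a; cases b) auto
    qed
  qed
qed

text \<open>
  Under \<open>d \<mapsto> n/d\<close> the interval \<open>[log d - 1, log d)\<close> is mapped by \<open>v \<mapsto> log n - 1 - v\<close> onto
  \<open>(log (n/d) - 1, log (n/d)]\<close>; the half-open endpoints only differ on a finite set.
\<close>

lemma Delta_reflect:
  assumes "n > 0"
  obtains S where "finite S" "\<And>v. v \<notin> S \<Longrightarrow> Delta n (ln (real n) - 1 - v) = Delta n v"
proof
  let ?D = "{d. d dvd n}"
  show "finite ((\<lambda>d. ln (real d)) ` ?D \<union> (\<lambda>d. ln (real d) - 1) ` ?D)"
    using assms by simp
  fix v assume v: "v \<notin> (\<lambda>d. ln (real d)) ` ?D \<union> (\<lambda>d. ln (real d) - 1) ` ?D"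
  have "(\<Sum>d\<in>?D. indicator {ln (real d) - 1..<ln (real d)} (ln (real n) - 1 - v)) =
        (\<Sum>d\<in>?D. indicator {ln (real d) - 1..<ln (real d)} v :: real)"
  proof (rule sum.reindex_bij_witness[where i="\<lambda>d. n div d" and j="\<lambda>d. n div d"])
    fix d assume d: "d \<in> ?D"
    then have "n div d \<in> ?D" by auto
    have "real d > 0" using d assms by (auto intro: gr0I)
    moreover have "real (n div d) = real n / real d" using d by (simp add: real_of_nat_div)
    ultimately have "ln (real (n div d)) = ln (real n) - ln (real d)"
      using assms by (simp add: ln_div)
    moreover have "v \<noteq> ln (real (n div d))" "v \<noteq> ln (real (n div d)) - 1"
      using v \<open>n div d \<in> ?D\<close> by blast+
    ultimately show "indicator {ln (real (n div d)) - 1..<ln (real (n div d))} v =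
          (indicator {ln (real d) - 1..<ln (real d)} (ln (real n) - 1 - v) :: real)"
      by (auto simp: indicator_def)
  qed (use assms in \<open>auto simp: div_div_eq_right dvd_div_mult_self\<close>)
  then show "Delta n (ln (real n) - 1 - v) = Delta n v"
    using Delta_eq_sum_indicator[OF assms] by (metis of_nat_eq_iff)
qed

lemma mixed_moment_swap:
  assumes "n > 0"
  shows "mixed_moment n c a b = mixed_moment n c b a"
proof -
  obtain S where S: "finite S" "\<And>v. v \<notin> S \<Longrightarrow> Delta n (ln (real n) - 1 - v) = Delta n v"
    using Delta_reflect[OF assms] by blast
  define t where "t = ln (real n) - 1 + c"
  \<comment> \<open>substituting \<open>u = t - x\<close> exchanges \<open>\<Delta>(n;u)\<close> and \<open>\<Delta>(n;u - c)\<close> off a finite set\<close>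
  have meas: "(\<lambda>x. real (Delta n (\<alpha> + \<beta> * x))) \<in> borel_measurable lborel" for \<alpha> \<beta>
    using measurable_compose[OF _ borel_measurable_Delta[OF assms], of "\<lambda>x. \<alpha> + \<beta> * x"] by measurable
  have "mixed_moment n c a b =
        \<bar>-1\<bar> *\<^sub>R (\<integral>x. real (Delta n (t + (-1) * x)) ^ a * real (Delta n (t + (-1) * x - c)) ^ b \<partial>lborel)"
    unfolding mixed_moment_def by (rule lborel_integral_real_affine) simp
  also have "\<dots> = (\<integral>x. real (Delta n (t + (-1) * x)) ^ a * real (Delta n (t + (-1) * x - c)) ^ b \<partial>lborel)"
    by simp
  also have "\<dots> = (\<integral>x. real (Delta n x) ^ b * real (Delta n (x - c)) ^ a \<partial>lborel)"
  proof (rule integral_cong_AE)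
    show "(\<lambda>x. real (Delta n (t + (-1) * x)) ^ a * real (Delta n (t + (-1) * x - c)) ^ b)
          \<in> borel_measurable lborel"
      using meas[of t "-1"] meas[of "t - c" "-1"] by (simp add: algebra_simps)
    show "(\<lambda>x. real (Delta n x) ^ b * real (Delta n (x - c)) ^ a) \<in> borel_measurable lborel"
      using meas[of 0 1] meas[of "-c" 1] by (simp add: algebra_simps)
    have "finite (S \<union> (\<lambda>w. w + c) ` S)" using S(1) by simp
    then show "AE x in lborel. real (Delta n (t + (-1) * x)) ^ a * real (Delta n (t + (-1) * x - c)) ^ b =
        real (Delta n x) ^ b * real (Delta n (x - c)) ^ a"
    proof (rule AE_mp[OF AE_not_in[OF finite_imp_null_set_lborel]], intro AE_I2 impI)
      fix x assume "x \<notin> S \<union> (\<lambda>w. w + c) ` S"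
      then have "x \<notin> S" "x - c \<notin> S" by (auto simp: image_iff)
      then have "Delta n (t + (-1) * x) = Delta n (x - c)" "Delta n (t + (-1) * x - c) = Delta n x"
        using S(2)[of "x - c"] S(2)[of x] by (simp_all add: t_def algebra_simps)
      then show "real (Delta n (t + (-1) * x)) ^ a * real (Delta n (t + (-1) * x - c)) ^ b =
          real (Delta n x) ^ b * real (Delta n (x - c)) ^ a"
        by (simp add: mult.commute)
    qed
  qed
  also have "\<dots> = mixed_moment n c b a"
    by (simp add: mixed_moment_def)
  finally show ?thesis .
qed

lemma M_prime_mult_eq_sum:
  fixes p n q :: nat
  assumes "prime p" "\<not> p dvd n" "n > 0" "q \<ge> 1"
  shows "M q (p * n) = (\<Sum>k\<le>q. real (q choose k) * mixed_moment n (ln (real p)) k (q - k))"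
proof -
  let ?c = "ln (real p)"
  have "M q (p * n) = (\<integral>u. (real (Delta n u) + real (Delta n (u - ?c))) ^ q \<partial>lborel)"
    unfolding M_def using Delta_prime_mult[OF assms(1-3)] by simp
  also have "\<dots> = (\<integral>u. (\<Sum>k\<le>q. real (q choose k) *
                   (real (Delta n u) ^ k * real (Delta n (u - ?c)) ^ (q - k))) \<partial>lborel)"
    by (simp add: binomial_ring mult.assoc)
  also have "\<dots> = (\<Sum>k\<le>q. real (q choose k) * mixed_moment n ?c k (q - k))"
    unfolding mixed_moment_def
    using assms(3,4) by (subst Bochner_Integration.integral_sum) (auto intro!: integrable_mixed_moment)
  finally show ?thesis .
qed

lemma sum_atMost_ge_ends:
  fixes g :: "nat \<Rightarrow> real"
  assumes "\<And>b. b \<le> q \<Longrightarrow> g b \<ge> 0" "g q = g 0" "q \<ge> 1"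
  shows "2 * g 0 \<le> (\<Sum>b\<le>q. g b)"
proof -
  have "g 0 + g q = (\<Sum>b\<in>{0, q}. g b)" using assms(3) by simp
  also have "\<dots> \<le> (\<Sum>b\<le>q. g b)" by (rule sum_mono2) (use assms(1) in auto)
  finally show ?thesis using assms(2) by simp
qed

lemma sum_atMost_le_half_sum:
  fixes g :: "nat \<Rightarrow> real"
  assumes "\<And>b. b \<le> q \<Longrightarrow> g b \<ge> 0" "\<And>b. b \<le> q \<Longrightarrow> g (q - b) = g b"
  shows "(\<Sum>b\<le>q. g b) \<le> 2 * g 0 + 2 * (\<Sum>b\<in>{b. 1 \<le> b \<and> 2 * b \<le> q}. g b)"
proof -
  let ?L = "{b. b \<le> q \<and> 2 * b \<le> q}" and ?R = "{b. b \<le> q \<and> q \<le> 2 * b}"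
  have "(\<Sum>b\<le>q. g b) = sum g ?L + sum g ?R - sum g (?L \<inter> ?R)"
    by (subst sum_Un[symmetric]) (auto intro: sum.cong)
  also have "\<dots> \<le> sum g ?L + sum g ?R"
    using assms(1) by (auto intro!: sum_nonneg)
  also have "sum g ?R = sum g ?L"
    by (rule sum.reindex_bij_witness[where i="\<lambda>b. q - b" and j="\<lambda>b. q - b"]) (auto simp: assms(2))
  also have "?L = insert 0 {b. 1 \<le> b \<and> 2 * b \<le> q}" by auto
  also have "sum g (insert 0 {b. 1 \<le> b \<and> 2 * b \<le> q}) = g 0 + (\<Sum>b\<in>{b. 1 \<le> b \<and> 2 * b \<le> q}. g b)"
    by (rule sum.insert) (auto intro: finite_subset[of _ "{..q}"])
  finally show ?thesis by simp
qed

theorem mainTheorem10: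
  fixes n p q :: nat
  assumes "prime p" and "\<not> p dvd n" and "q \<ge> 1"
  shows "(M q (p * n) / real (tau (p * n)) \<le>
           M q n / real (tau n)
           + (1 / real (tau n)) *
             (\<Sum>b\<in>{b. 1 \<le> b \<and> 2 * b \<le> q}.
                real (q choose (q - b)) *
                (\<integral>u. real (Delta n u) ^ (q - b) * real (Delta n (u - ln (real p))) ^ b \<partial>lborel))) \<and>
         M q (p * n) / real (tau (p * n)) \<ge> M q n / real (tau n)"
proof (cases "n = 0")
  case True
  \<comment> \<open>every number divides \<open>0\<close>, so \<open>tau 0 = card UNIV = 0\<close> and all quotients are \<open>0\<close>\<close>
  then show ?thesis by (simp add: tau_def infinite_UNIV_nat)
next
  case False
  then have n0: "n > 0" by simp
  define g where "g k = real (q choose k) * mixed_moment n (ln (real p)) k (q - k)" for k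
  have sym: "g (q - k) = g k" if "k \<le> q" for k
    using that mixed_moment_swap[OF n0] by (simp add: g_def binomial_symmetric[symmetric])
  have nonneg: "g k \<ge> 0" for k
    by (simp add: g_def mixed_moment_nonneg)
  have half_sum: "(\<Sum>b\<in>{b. 1 \<le> b \<and> 2 * b \<le> q}. real (q choose (q - b)) *
                  (\<integral>u. real (Delta n u) ^ (q - b) * real (Delta n (u - ln (real p))) ^ b \<partial>lborel))
                = (\<Sum>b\<in>{b. 1 \<le> b \<and> 2 * b \<le> q}. g b)"
  proof (intro sum.cong refl)
    fix b assume "b \<in> {b. 1 \<le> b \<and> 2 * b \<le> q}"
    then have "b \<le> q" by auto
    then show "real (q choose (q - b)) *
                (\<integral>u. real (Delta n u) ^ (q - b) * real (Delta n (u - ln (real p))) ^ b \<partial>lborel) = g b"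
      using sym[of b] by (simp add: g_def mixed_moment_def)
  qed
  have "real (tau n) > 0"
    using n0 unfolding tau_def by (auto simp: card_gt_0_iff intro!: exI[of _ 1])
  moreover have "M q (p * n) = (\<Sum>k\<le>q. g k)" "M q n = g q"
    using M_prime_mult_eq_sum[OF assms(1,2) n0 assms(3)] by (simp_all add: g_def M_eq_mixed_moment)
  moreover note sum_atMost_ge_ends[of q g] sum_atMost_le_half_sum[of q g]
  ultimately show ?thesis
    unfolding half_sum tau_prime_mult[OF assms(1,2) n0] using nonneg sym[of q] sym assms(3)
    by (auto simp: field_simps)
qed

end
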